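(* There exists a function $\ell\in C^2(\overline{\mathcal{S}})$ with $\ell<0$ on $\overline{\mathcal{S}}$ and $\ell(x,y)\to-\infty$ as $\|(x,y)\|\to\infty$ within $\overline{\mathcal{S}}$, which is a strict classical subsolution of the HJB inequality in $\mathcal{S}$, i.e. for all $(x,y)\in\mathcal{S}$: $$\mathcal{L}\ell(x,y)<0,\qquad -(1-\mu)\ell_x(x,y)+\ell_y(x,y)<0,\qquad \ell_x(x,y)-(1-\lambda)\ell_y(x,y)<0.$$ (For instance, $\ell(x,y)=-\frac{(x+ky-b+1)^p}{p}$ with any $k\in(1-\mu,\frac{1}{1-\lambda})$ and $p\in(0,1)$ sufficiently small.)
   Context: Constants $r>0$, $\alpha>r$, $\sigma>0$, $\beta>0$, $\lambda,\mu\in(0,1)$, $c>0$, $b<c/r$. $L(x,y):=x+(1-\mu)y^+-\frac{1}{1-\lambda}y^-$, $\mathcal{S}_a:=\{(x,y)\in\mathbb{R}^2:L(x,y)>a\}$, $\mathcal{S}:=\mathcal{S}_b\setminus\overline{\mathcal{S}_{c/r}}$ (closures in $\mathbb{R}^2$). For $\varphi\in C^2$, $\mathcal{L}\varphi:=\beta\varphi-(rx-c)\varphi_x-\alpha y\varphi_y-\frac12\sigma^2y^2\varphi_{yy}$. *)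

theory Defs
  imports "HOL-Analysis.Analysis"
begin

definition Lval :: "real \<Rightarrow> real \<Rightarrow> real \<Rightarrow> real \<Rightarrow> real" where
  "Lval lam mu x y = x + (1 - mu) * max y 0 - (1 / (1 - lam)) * max (- y) 0"

definition Sa :: "real \<Rightarrow> real \<Rightarrow> real \<Rightarrow> (real \<times> real) set" where
  "Sa lam mu a = {(x, y). Lval lam mu x y > a}"

definition Sreg :: "real \<Rightarrow> real \<Rightarrow> real \<Rightarrow> real \<Rightarrow> real \<Rightarrow> (real \<times> real) set" where
  "Sreg lam mu b c r = Sa lam mu b - closure (Sa lam mu (c / r))"

text \<open>The operator L applied to a C^2 function, given its value, first partials and
  the second partial in y.\<close>
definition Lop :: "real \<Rightarrow> real \<Rightarrow> real \<Rightarrow> real \<Rightarrow> real \<Rightarrow> real \<Rightarrow> real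
                   \<Rightarrow> real \<Rightarrow> real \<Rightarrow> real \<Rightarrow> real \<Rightarrow> real" where
  "Lop beta r c alpha sig x y v vx vy vyy =
     beta * v - (r * x - c) * vx - alpha * y * vy - (1/2) * sig^2 * y^2 * vyy"

end

theory Submission
  imports Defs
begin

text \<open>The witness is the logarithmic barrier \<open>\<ell>(x,y) = -M - ln (x + y - b + 1)\<close>,
  the limit \<open>p \<rightarrow> 0\<close> of the paper's example with \<open>k = 1\<close>. The liquidation value never
  exceeds \<open>x + y\<close> and is at least \<open>b\<close> on the closure of \<open>\<S>\<close>, so the argument of the
  logarithm is at least 1 there; this gives \<open>\<ell> < 0\<close>, and since \<open>\<ell>\<^sub>x = \<ell>\<^sub>y < 0\<close> the two
  gradient constraints reduce to \<open>\<mu> \<ell>\<^sub>x < 0\<close> and \<open>\<lambda> \<ell>\<^sub>x < 0\<close>. In \<open>\<L>\<ell>\<close> the terms in \<open>y\<close>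
  form a concave quadratic in \<open>y / (x + y - b + 1)\<close>, bounded by \<open>(\<alpha> - r)\<^sup>2 / (2 \<sigma>\<^sup>2)\<close>,
  \<open>r b < c\<close> makes the remaining drift term negative, and a large constant \<open>M\<close> absorbs
  the rest. Coercivity holds because the transaction costs bound \<open>|y|\<close> by a multiple
  of \<open>x + y - L(x,y)\<close>.\<close>

lemma Lval_gap:
  fixes lam mu x y :: real
  assumes "0 < lam" "lam < 1" "0 < mu"
  shows "min mu lam * \<bar>y\<bar> \<le> x + y - Lval lam mu x y"
proof (cases "y \<ge> 0")
  case True
  then have "min mu lam * \<bar>y\<bar> \<le> mu * y"
    by (simp add: mult_right_mono)
  then show ?thesis using True by (simp add: Lval_def algebra_simps)
next
  case False
  have "lam * (- y) \<le> lam * (- y) / (1 - lam)"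
    using False assms divide_left_mono[of "1 - lam" 1 "lam * (- y)"]
    by (simp add: mult_pos_neg less_imp_le)
  moreover have "min mu lam * \<bar>y\<bar> \<le> lam * (- y)"
    using False by (simp add: mult_right_mono)
  moreover have "x + y - Lval lam mu x y = lam * (- y) / (1 - lam)"
    using False assms by (simp add: Lval_def field_simps)
  ultimately show ?thesis by linarith
qed

lemma closure_Sreg_subset:
  "closure (Sreg lam mu b c r) \<subseteq> {z. b \<le> Lval lam mu (fst z) (snd z)}"
proof (rule closure_minimal)
  show "Sreg lam mu b c r \<subseteq> {z. b \<le> Lval lam mu (fst z) (snd z)}"
    by (auto simp: Sreg_def Sa_def)
  show "closed {z. b \<le> Lval lam mu (fst z) (snd z)}"
    unfolding Lval_def by (intro closed_Collect_le continuous_intros)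
qed

lemma norm_le_of_Lval_ge:
  fixes lam mu x y b :: real
  assumes "0 < lam" "lam < 1" "0 < mu" and L: "b \<le> Lval lam mu x y"
  shows "norm (x, y) \<le> \<bar>b\<bar> + (1 + 2 / min mu lam) * (x + y - b)"
proof -
  define m where "m = min mu lam"
  have m: "m > 0" using assms by (simp add: m_def)
  have gap: "m * \<bar>y\<bar> \<le> x + y - b"
    using Lval_gap[OF assms(1-3), of y x] L by (simp add: m_def)
  then have y: "\<bar>y\<bar> \<le> (x + y - b) / m"
    using m by (simp add: le_divide_eq mult.commute)
  have "0 \<le> m * \<bar>y\<bar>" using m by simp
  then have "\<bar>x + y\<bar> \<le> \<bar>b\<bar> + (x + y - b)" using gap abs_ge_self[of b] abs_ge_minus_self[of b]
    unfolding abs_le_iff by linarith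
  have "norm (x, y) \<le> \<bar>x\<bar> + \<bar>y\<bar>" using norm_Pair_le[of x y] by simp
  also have "\<dots> \<le> \<bar>x + y\<bar> + 2 * \<bar>y\<bar>" using abs_triangle_ineq[of "x + y" "- y"] by simp
  also have "\<dots> \<le> (\<bar>b\<bar> + (x + y - b)) + 2 * ((x + y - b) / m)"
    using y \<open>\<bar>x + y\<bar> \<le> \<bar>b\<bar> + (x + y - b)\<close> by linarith
  also have "\<dots> = \<bar>b\<bar> + (1 + 2 / m) * (x + y - b)" by (simp add: algebra_simps)
  finally show ?thesis by (simp add: m_def)
qed

lemma Lop_log_barrier_neg:
  fixes beta r c alpha sig b x y w M :: real
  assumes "0 < beta" "0 < sig" "0 < r" "r * b < c"
    and w_eq: "w = x + y - b + 1" and w: "1 \<le> w"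
    and M_eq: "M = (r + (alpha - r)\<^sup>2 / (2 * sig\<^sup>2)) / beta + 1"
  shows "Lop beta r c alpha sig x y (- M - ln w) (- 1 / w) (- 1 / w) (1 / w\<^sup>2) < 0"
proof -
  define t where "t = y / w"
  have "w > 0" using w by simp
  have "x = w - 1 + b - y" by (simp add: w_eq)
  have quadratic: "(alpha - r) * t - 1/2 * sig\<^sup>2 * t\<^sup>2 \<le> (alpha - r)\<^sup>2 / (2 * sig\<^sup>2)"
  proof -
    have "0 \<le> (sig * t - (alpha - r) / sig)\<^sup>2 / 2" by simp
    also have "\<dots> = 1/2 * sig\<^sup>2 * t\<^sup>2 - (alpha - r) * t + (alpha - r)\<^sup>2 / (2 * sig\<^sup>2)"
      using \<open>0 < sig\<close> by (simp add: power2_eq_square field_simps)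
    finally show ?thesis by simp
  qed
  have Lop_eq: "Lop beta r c alpha sig x y (- M - ln w) (- 1 / w) (- 1 / w) (1 / w\<^sup>2)
      = - beta * M - beta * ln w + r + (r * (b - 1) - c) / w
        + ((alpha - r) * t - 1/2 * sig\<^sup>2 * t\<^sup>2)"
    using \<open>w > 0\<close> unfolding Lop_def t_def \<open>x = w - 1 + b - y\<close>
    by (simp add: field_simps power2_eq_square)
  have "beta * M = r + (alpha - r)\<^sup>2 / (2 * sig\<^sup>2) + beta"
    using \<open>0 < beta\<close> by (simp add: M_eq field_simps)
  moreover have "0 \<le> beta * ln w" using w \<open>0 < beta\<close> by simp
  moreover have "(r * (b - 1) - c) / w < 0"
    using \<open>w > 0\<close> \<open>r * b < c\<close> \<open>0 < r\<close> by (intro divide_neg_pos) (auto simp: algebra_simps)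
  ultimately show ?thesis using Lop_eq quadratic \<open>0 < beta\<close> by linarith
qed

definition barrier_arg :: "real \<Rightarrow> real \<times> real \<Rightarrow> real" where
  "barrier_arg b z = fst z + snd z - b + 1"

lemma barrier_arg_ge_one:
  assumes "0 < lam" "lam < 1" "0 < mu" and "z \<in> closure (Sreg lam mu b c r)"
  shows "1 \<le> barrier_arg b z"
proof -
  have "b \<le> Lval lam mu (fst z) (snd z)" using assms(4) closure_Sreg_subset by blast
  moreover have "0 \<le> min mu lam * \<bar>snd z\<bar>" using assms by simp
  ultimately show ?thesis
    using Lval_gap[OF assms(1-3), of "snd z" "fst z"] by (simp add: barrier_arg_def)
qed

lemma log_barrier_coercive:
  fixes lam mu b M M' :: real
  assumes "0 < lam" "lam < 1" "0 < mu"
  shows "\<exists>R. \<forall>z\<in>closure (Sreg lam mu b c r). R < norm z \<longrightarrow> - M - ln (barrier_arg b z) < - M'"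
proof (intro exI ballI impI)
  fix z :: "real \<times> real"
  define K where "K = 1 + 2 / min mu lam"
  have K: "K > 0" using assms unfolding K_def by (simp add: add_pos_nonneg)
  assume "z \<in> closure (Sreg lam mu b c r)"
    and R: "\<bar>b\<bar> + K * exp (M' - M) < norm z"
  then have L: "b \<le> Lval lam mu (fst z) (snd z)" using closure_Sreg_subset by blast
  have "norm z \<le> \<bar>b\<bar> + K * (fst z + snd z - b)"
    using norm_le_of_Lval_ge[OF assms L] by (simp add: K_def)
  with R have "K * exp (M' - M) < K * (fst z + snd z - b)" by linarith
  with K have "exp (M' - M) < barrier_arg b z" by (simp add: barrier_arg_def)
  then have "ln (exp (M' - M)) < ln (barrier_arg b z)"
    by (intro ln_strict_mono) auto
  then show "- M - ln (barrier_arg b z) < - M'" by simp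
qed

lemma log_barrier_smooth:
  fixes b M :: real
  defines "U \<equiv> {z. 0 < barrier_arg b z}"
  shows "open U"
    and "\<forall>z\<in>U. ((\<lambda>z. - M - ln (barrier_arg b z)) has_derivative
      (\<lambda>(h, k). (- 1 / barrier_arg b z) * h + (- 1 / barrier_arg b z) * k)) (at z)"
    and "\<forall>z\<in>U. ((\<lambda>z. - 1 / barrier_arg b z) has_derivative
      (\<lambda>(h, k). (1 / (barrier_arg b z)\<^sup>2) * h + (1 / (barrier_arg b z)\<^sup>2) * k)) (at z)"
    and "continuous_on U (\<lambda>z. 1 / (barrier_arg b z)\<^sup>2)"
proof -
  show "open U"
    unfolding U_def barrier_arg_def by (intro open_Collect_less continuous_intros)
  show "continuous_on U (\<lambda>z. 1 / (barrier_arg b z)\<^sup>2)"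
    unfolding U_def barrier_arg_def by (intro continuous_intros) auto
  show "\<forall>z\<in>U. ((\<lambda>z. - M - ln (barrier_arg b z)) has_derivative
      (\<lambda>(h, k). (- 1 / barrier_arg b z) * h + (- 1 / barrier_arg b z) * k)) (at z)"
    unfolding U_def barrier_arg_def
    by (auto intro!: derivative_eq_intros simp: fun_eq_iff split: prod.splits)
      (simp_all add: add_divide_distrib divide_inverse algebra_simps)
  show "\<forall>z\<in>U. ((\<lambda>z. - 1 / barrier_arg b z) has_derivative
      (\<lambda>(h, k). (1 / (barrier_arg b z)\<^sup>2) * h + (1 / (barrier_arg b z)\<^sup>2) * k)) (at z)"
    unfolding U_def barrier_arg_def
    by (auto intro!: derivative_eq_intros simp: fun_eq_iff split: prod.splits)
      (simp_all add: power2_eq_square add_divide_distrib divide_inverse algebra_simps)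
qed

lemma log_barrier_subsolution:
  fixes r alpha sig beta lam mu c b x y :: real
  defines "M \<equiv> (r + (alpha - r)\<^sup>2 / (2 * sig\<^sup>2)) / beta + 1"
    and "w \<equiv> barrier_arg b (x, y)"
  assumes r: "0 < r" and sig: "0 < sig" and beta: "0 < beta"
    and lam: "0 < lam" "lam < 1" and mu: "0 < mu" and rb: "r * b < c"
    and S: "(x, y) \<in> Sreg lam mu b c r"
  shows "Lop beta r c alpha sig x y (- M - ln w) (- 1 / w) (- 1 / w) (1 / w\<^sup>2) < 0"
    and "- (1 - mu) * (- 1 / w) + (- 1 / w) < 0"
    and "(- 1 / w) - (1 - lam) * (- 1 / w) < 0"
proof -
  have w: "1 \<le> w"
    unfolding w_def using barrier_arg_ge_one[OF lam mu] S closure_subset by blast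
  show "Lop beta r c alpha sig x y (- M - ln w) (- 1 / w) (- 1 / w) (1 / w\<^sup>2) < 0"
    by (rule Lop_log_barrier_neg[OF beta sig r rb _ w]) (simp_all add: w_def barrier_arg_def M_def)
  have "0 < w" using w by simp
  then have "- (1 - mu) * (- 1 / w) + (- 1 / w) = - (mu / w)"
    and "(- 1 / w) - (1 - lam) * (- 1 / w) = - (lam / w)"
    by (simp_all add: field_simps)
  then show "- (1 - mu) * (- 1 / w) + (- 1 / w) < 0" "(- 1 / w) - (1 - lam) * (- 1 / w) < 0"
    using lam mu \<open>0 < w\<close> by simp_all
qed

theorem mainTheorem13:
  fixes r alpha sig beta lam mu c b :: real
  assumes "r > 0" and "alpha > r" and "sig > 0" and "beta > 0"
    and "0 < lam" and "lam < 1" and "0 < mu" and "mu < 1"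
    and "c > 0" and "b < c / r"
  shows "\<exists>(l :: real \<times> real \<Rightarrow> real) lx ly lxx lxy lyx lyy U.
     open U \<and> closure (Sreg lam mu b c r) \<subseteq> U \<and>
     (\<forall>z\<in>U. (l has_derivative (\<lambda>(h, k). lx z * h + ly z * k)) (at z)) \<and>
     (\<forall>z\<in>U. (lx has_derivative (\<lambda>(h, k). lxx z * h + lxy z * k)) (at z)) \<and>
     (\<forall>z\<in>U. (ly has_derivative (\<lambda>(h, k). lyx z * h + lyy z * k)) (at z)) \<and>
     continuous_on U lxx \<and> continuous_on U lxy \<and>
     continuous_on U lyx \<and> continuous_on U lyy \<and>
     (\<forall>z\<in>closure (Sreg lam mu b c r). l z < 0) \<and>
     (\<forall>M. \<exists>R. \<forall>z\<in>closure (Sreg lam mu b c r). norm z > R \<longrightarrow> l z < - M) \<and>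
     (\<forall>x y. (x, y) \<in> Sreg lam mu b c r \<longrightarrow>
        Lop beta r c alpha sig x y (l (x, y)) (lx (x, y)) (ly (x, y)) (lyy (x, y)) < 0 \<and>
        - (1 - mu) * lx (x, y) + ly (x, y) < 0 \<and>
        lx (x, y) - (1 - lam) * ly (x, y) < 0)"
proof -
  define M where "M = (r + (alpha - r)\<^sup>2 / (2 * sig\<^sup>2)) / beta + 1"
  define l where "l z = - M - ln (barrier_arg b z)" for z
  define lx where "lx z = - 1 / barrier_arg b z" for z
  define lxx where "lxx z = 1 / (barrier_arg b z)\<^sup>2" for z
  define U where "U = {z. 0 < barrier_arg b z}"
  let ?S = "Sreg lam mu b c r"
  note smooth = log_barrier_smooth(2)[where b = b and M = M] log_barrier_smooth(1,3,4)[where b = b]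
  note smooth = smooth[folded U_def l_def lx_def lxx_def]
  have arg_ge: "\<And>z. z \<in> closure ?S \<Longrightarrow> 1 \<le> barrier_arg b z"
    using barrier_arg_ge_one assms(5-7) by blast
  have "r * b < c" using assms by (simp add: pos_less_divide_eq mult.commute)
  have "closure ?S \<subseteq> U" using arg_ge by (force simp: U_def)
  have "0 < M" using assms by (simp add: M_def add_pos_nonneg)
  have "\<forall>z\<in>closure ?S. l z < 0"
    using arg_ge ln_ge_zero \<open>0 < M\<close> by (smt (verit) l_def)
  have "\<forall>M'. \<exists>R. \<forall>z\<in>closure ?S. R < norm z \<longrightarrow> l z < - M'"
    using log_barrier_coercive[OF assms(5-7)] by (simp add: l_def)
  have "\<forall>x y. (x, y) \<in> ?S \<longrightarrow>
      Lop beta r c alpha sig x y (l (x, y)) (lx (x, y)) (lx (x, y)) (lxx (x, y)) < 0 \<and>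
      - (1 - mu) * lx (x, y) + lx (x, y) < 0 \<and> lx (x, y) - (1 - lam) * lx (x, y) < 0"
    using log_barrier_subsolution[OF assms(1,3,4,5,6,7) \<open>r * b < c\<close>]
    by (simp add: l_def lx_def lxx_def M_def)
  \<comment> \<open>\<open>\<ell>\<close> depends on \<open>x + y\<close> only, so \<open>\<ell>\<^sub>y = \<ell>\<^sub>x\<close> and all second derivatives coincide.\<close>
  show ?thesis
    by (rule exI[of _ l], rule exI[of _ lx], rule exI[of _ lx], rule exI[of _ lxx],
        rule exI[of _ lxx], rule exI[of _ lxx], rule exI[of _ lxx], rule exI[of _ U])
      (intro conjI; fact)
qed

end
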